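(* Let $G=(V,E)$ be a finite connected multigraph, $\mathscr H$ its exchange graph, $\mathscr H_0$ a connected component of $\mathscr H$ with vertex set $\mathscr V_0$, and $G_0$ the spanning subgraph of $G$ associated to $\mathscr H_0$. Let $X\subseteq V$ be saturated with respect to $G_0$. Then for every vertex $(A,B)\in\mathscr V_0$, the induced subgraphs $A[X]$ and $B[X]$ are edge-disjoint trees with vertex set $X$.
   Context: A spanning tree of $G$ is a subgraph with vertex set $V$ that is a tree; a spanning 2-forest is a subgraph with vertex set $V$, without cycles, with exactly two connected components. $\mathcal{ST}(G)$ and $\mathcal{SF}_2(G)$ denote the sets of these. For a spanning subgraph $G'$ and an edge $e\notin E(G')$, $G'+e$ is the spanning subgraph with edge set $E(G')\cup\{e\}$; for $e\in E(G')$, $G'-e$ has edge set $E(G')\setminus\{e\}$. The exchange graph $\mathscr H$ of $G$ is the bipartite graph with vertex set $\mathscr V_1\sqcup\mathscr V_2$, where $\mathscr V_1=\{(F,T): F\in\mathcal{SF}_2(G),T\in\mathcal{ST}(G),E(F)\cap E(T)=\emptyset\}$ and $\mathscr V_2=\{(T,F):T\in\mathcal{ST}(G),F\in\mathcal{SF}_2(G),E(F)\cap E(T)=\emptyset\}$; $(F,T)\in\mathscr V_1$ is adjacent to $(T',F')\in\mathscr V_2$ iff there is an edge $e\in E(T)$ with $F'=T-e$ and $T'=F+e$. For a connected component $\mathscr H_0$ of $\mathscr H$, the set $E(A)\cup E(B)$ is the same for all vertices $(A,B)$ of $\mathscr H_0$; the associated spanning subgraph $G_0$ is the spanning subgraph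 of $G$ with this edge set. For $X\subseteq V$ and a (spanning) subgraph $K$, $K[X]$ denotes the induced subgraph on $X$ (vertex set $X$, edges of $K$ with both endpoints in $X$). A subset $X\subseteq V$ is saturated with respect to $G_0$ if $G_0[X]$ has exactly $2|X|-2$ edges. *)

theory Defs
  imports Main
begin

text \<open>A finite multigraph is given by a vertex set V, an edge set E (edges are abstract
objects of type 'e, so parallel edges are allowed) and an endpoint map: each edge has
one (loop) or two endpoints in V. Spanning subgraphs are identified with their edge sets.\<close>

definition multigraph :: "'v set \<Rightarrow> 'e set \<Rightarrow> ('e \<Rightarrow> 'v set) \<Rightarrow> bool" where
  "multigraph V E ends \<longleftrightarrow> finite V \<and> finite E \<and>
     (\<forall>e\<in>E. ends e \<subseteq> V \<and> ends e \<noteq> {} \<and> card (ends e) \<le> 2)"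

definition reach :: "('e \<Rightarrow> 'v set) \<Rightarrow> 'e set \<Rightarrow> 'v set \<Rightarrow> ('v \<times> 'v) set" where
  "reach ends F X = {(u, w). u \<in> X \<and> w \<in> X \<and>
     (u, w) \<in> ({(a, b). a \<in> X \<and> b \<in> X \<and> (\<exists>e\<in>F. ends e = {a, b})})\<^sup>*}"

definition connected_on :: "('e \<Rightarrow> 'v set) \<Rightarrow> 'e set \<Rightarrow> 'v set \<Rightarrow> bool" where
  "connected_on ends F X \<longleftrightarrow> X \<noteq> {} \<and> (\<forall>u\<in>X. \<forall>w\<in>X. (u, w) \<in> reach ends F X)"

definition num_components :: "('e \<Rightarrow> 'v set) \<Rightarrow> 'e set \<Rightarrow> 'v set \<Rightarrow> nat" where
  "num_components ends F X = card (X // reach ends F X)"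

text \<open>A cycle: distinct edges e_0..e_(k-1) (k>=1) and distinct vertices v_0..v_(k-1) with
ends e_i = {v_i, v_(i+1 mod k)} (k=1: loop, k=2: pair of parallel edges).\<close>
definition has_cycle :: "('e \<Rightarrow> 'v set) \<Rightarrow> 'e set \<Rightarrow> bool" where
  "has_cycle ends F \<longleftrightarrow> (\<exists>es vs. es \<noteq> [] \<and> length vs = length es \<and> distinct es \<and>
     distinct vs \<and> set es \<subseteq> F \<and>
     (\<forall>i<length es. ends (es ! i) = {vs ! i, vs ! ((i + 1) mod length es)}))"

definition is_subgraph_on :: "('e \<Rightarrow> 'v set) \<Rightarrow> 'e set \<Rightarrow> 'v set \<Rightarrow> bool" where
  "is_subgraph_on ends F X \<longleftrightarrow> (\<forall>e\<in>F. ends e \<subseteq> X)"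

definition is_tree :: "('e \<Rightarrow> 'v set) \<Rightarrow> 'e set \<Rightarrow> 'v set \<Rightarrow> bool" where
  "is_tree ends F X \<longleftrightarrow> is_subgraph_on ends F X \<and> \<not> has_cycle ends F \<and> connected_on ends F X"

definition spanning_trees :: "'v set \<Rightarrow> 'e set \<Rightarrow> ('e \<Rightarrow> 'v set) \<Rightarrow> 'e set set" where
  "spanning_trees V E ends = {T. T \<subseteq> E \<and> is_tree ends T V}"

definition spanning_2forests :: "'v set \<Rightarrow> 'e set \<Rightarrow> ('e \<Rightarrow> 'v set) \<Rightarrow> 'e set set" where
  "spanning_2forests V E ends = {F. F \<subseteq> E \<and> \<not> has_cycle ends F \<and> num_components ends F V = 2}"

definition induced :: "('e \<Rightarrow> 'v set) \<Rightarrow> 'e set \<Rightarrow> 'v set \<Rightarrow> 'e set" where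
  "induced ends K X = {e \<in> K. ends e \<subseteq> X}"

text \<open>Exchange graph: vertices Inl (F,T) form V_1, vertices Inr (T,F) form V_2.\<close>
type_synonym 'e exvert = "('e set \<times> 'e set) + ('e set \<times> 'e set)"

definition exch_verts :: "'v set \<Rightarrow> 'e set \<Rightarrow> ('e \<Rightarrow> 'v set) \<Rightarrow> 'e exvert set" where
  "exch_verts V E ends =
     {Inl (F, T) | F T. F \<in> spanning_2forests V E ends \<and> T \<in> spanning_trees V E ends \<and> F \<inter> T = {}} \<union>
     {Inr (T, F) | T F. T \<in> spanning_trees V E ends \<and> F \<in> spanning_2forests V E ends \<and> F \<inter> T = {}}"

definition exch_adj12 :: "'e set \<times> 'e set \<Rightarrow> 'e set \<times> 'e set \<Rightarrow> bool" where
  "exch_adj12 p q \<longleftrightarrow> (case p of (F, T) \<Rightarrow> case q of (T', F') \<Rightarrow>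
      (\<exists>e\<in>T. F' = T - {e} \<and> T' = F \<union> {e}))"

definition exch_edges :: "'v set \<Rightarrow> 'e set \<Rightarrow> ('e \<Rightarrow> 'v set) \<Rightarrow> ('e exvert \<times> 'e exvert) set" where
  "exch_edges V E ends =
     {(Inl p, Inr q) | p q. Inl p \<in> exch_verts V E ends \<and> Inr q \<in> exch_verts V E ends \<and> exch_adj12 p q} \<union>
     {(Inr q, Inl p) | p q. Inl p \<in> exch_verts V E ends \<and> Inr q \<in> exch_verts V E ends \<and> exch_adj12 p q}"

definition exch_component :: "'v set \<Rightarrow> 'e set \<Rightarrow> ('e \<Rightarrow> 'v set) \<Rightarrow> 'e exvert \<Rightarrow> 'e exvert set" where
  "exch_component V E ends h0 = {h \<in> exch_verts V E ends. (h0, h) \<in> (exch_edges V E ends)\<^sup>*}"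

definition vpair :: "'e exvert \<Rightarrow> 'e set \<times> 'e set" where
  "vpair h = (case h of Inl p \<Rightarrow> p | Inr p \<Rightarrow> p)"

text \<open>Edge set E(A) \<union> E(B) of the associated spanning subgraph G_0 (constant on a component).\<close>
definition assoc_edges :: "'e exvert \<Rightarrow> 'e set" where
  "assoc_edges h = fst (vpair h) \<union> snd (vpair h)"

definition saturated :: "('e \<Rightarrow> 'v set) \<Rightarrow> 'e set \<Rightarrow> 'v set \<Rightarrow> bool" where
  "saturated ends E0 X \<longleftrightarrow> int (card (induced ends E0 X)) = 2 * int (card X) - 2"

end

theory Submission
  imports Defs
begin

text \<open>Saturation is inherited along the exchange graph, since an exchange step only moves one
edge between the two members of a pair, so E(A) \<union> E(B) is the same for every vertex (A,B) of the
component. For such a pair, A[X] and B[X] are forests on X, and a forest on X with k components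
has |X| - k edges. Two forests with 2|X| - 2 edges in total must therefore both have exactly one
component, i.e. both are trees on X; they are edge-disjoint because A and B are.\<close>

definition edge_rel :: "('e \<Rightarrow> 'v set) \<Rightarrow> 'e set \<Rightarrow> 'v set \<Rightarrow> ('v \<times> 'v) set" where
  "edge_rel ends F X = {(a, b). a \<in> X \<and> b \<in> X \<and> (\<exists>e\<in>F. ends e = {a, b})}"

definition simple_path :: "('e \<Rightarrow> 'v set) \<Rightarrow> 'e set \<Rightarrow> 'v list \<Rightarrow> 'e list \<Rightarrow> bool" where
  "simple_path ends F vs es \<longleftrightarrow> length vs = Suc (length es) \<and> distinct vs \<and> distinct es \<and>
     set es \<subseteq> F \<and> (\<forall>i<length es. ends (es ! i) = {vs ! i, vs ! Suc i})"

lemma reach_iff: "(u, w) \<in> reach ends F X \<longleftrightarrow> u \<in> X \<and> w \<in> X \<and> (u, w) \<in> (edge_rel ends F X)\<^sup>*"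
  by (simp add: reach_def edge_rel_def)

lemma reach_refl: "x \<in> X \<Longrightarrow> (x, x) \<in> reach ends F X"
  by (simp add: reach_iff)

lemma reach_trans: "(u, v) \<in> reach ends F X \<Longrightarrow> (v, w) \<in> reach ends F X \<Longrightarrow> (u, w) \<in> reach ends F X"
  by (auto simp: reach_iff intro: rtrancl_trans)

lemma reach_sym:
  assumes "(u, w) \<in> reach ends F X"
  shows "(w, u) \<in> reach ends F X"
proof -
  have "sym ((edge_rel ends F X)\<^sup>*)"
    by (rule sym_rtrancl) (auto simp: sym_def edge_rel_def insert_commute)
  with assms show ?thesis by (auto simp: reach_iff dest: symD)
qed

lemma reach_mono: "F \<subseteq> G \<Longrightarrow> reach ends F X \<subseteq> reach ends G X"
proof -
  assume "F \<subseteq> G"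
  then have "edge_rel ends F X \<subseteq> edge_rel ends G X" by (auto simp: edge_rel_def)
  then show ?thesis by (auto simp: reach_iff dest: rtrancl_mono[THEN subsetD])
qed

lemma has_cycle_mono: "has_cycle ends F \<Longrightarrow> F \<subseteq> G \<Longrightarrow> has_cycle ends G"
  unfolding has_cycle_def by blast

subsection \<open>Simple paths and cycles\<close>

lemma nth_eq_last_if_length_Suc: "length xs = Suc n \<Longrightarrow> xs ! n = last xs"
  by (metis diff_Suc_1 last_conv_nth length_0_conv nat.distinct(1))

lemma simple_path_take:
  assumes "simple_path ends F vs es" "i < length vs"
  shows "simple_path ends F (take (Suc i) vs) (take i es)"
  using assms unfolding simple_path_def by (auto simp: min_def dest: in_set_takeD)

lemma simple_path_snoc:
  assumes p: "simple_path ends F vs es" and z: "z \<notin> set vs"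
    and e: "e \<in> F" "ends e = {last vs, z}"
  shows "simple_path ends F (vs @ [z]) (es @ [e])"
  unfolding simple_path_def
proof (intro conjI allI impI)
  have len: "length vs = Suc (length es)" using p by (simp add: simple_path_def)
  have e_new: "e \<notin> set es"
  proof
    assume "e \<in> set es"
    then obtain j where "j < length es" "es ! j = e" by (auto simp: in_set_conv_nth)
    with p len have "ends e \<subseteq> set vs" by (auto simp: simple_path_def)
    with e z show False by auto
  qed
  show "length (vs @ [z]) = Suc (length (es @ [e]))" using len by simp
  show "distinct (vs @ [z])" using p z by (simp add: simple_path_def)
  show "distinct (es @ [e])" using p e_new by (simp add: simple_path_def)
  show "set (es @ [e]) \<subseteq> F" using p e by (simp add: simple_path_def)
  fix j assume j: "j < length (es @ [e])"
  show "ends ((es @ [e]) ! j) = {(vs @ [z]) ! j, (vs @ [z]) ! Suc j}"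
  proof (cases "j < length es")
    case True
    then show ?thesis using p len by (simp add: simple_path_def nth_append)
  next
    case False
    then have "j = length es" using j by simp
    then show ?thesis using len e(2) nth_eq_last_if_length_Suc[OF len] by (simp add: nth_append)
  qed
qed

lemma simple_path_if_rtrancl:
  assumes "(u, w) \<in> (edge_rel ends F X)\<^sup>*"
  shows "\<exists>vs es. simple_path ends F vs es \<and> hd vs = u \<and> last vs = w"
  using assms
proof (induction rule: rtrancl_induct)
  case base
  have "simple_path ends F [u] []" by (simp add: simple_path_def)
  then show ?case by (intro exI[of _ "[u]"] exI[of _ "[]"]) simp
next
  case (step y z)
  then obtain vs es where p: "simple_path ends F vs es" "hd vs = u" "last vs = y" by blast
  have len: "length vs = Suc (length es)" using p(1) by (simp add: simple_path_def)
  show ?case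
  proof (cases "z \<in> set vs")
    case True
    then obtain i where i: "i < length vs" "vs ! i = z" by (auto simp: in_set_conv_nth)
    have "length (take (Suc i) vs) = Suc i" using i(1) by simp
    then have "last (take (Suc i) vs) = z"
      using i nth_eq_last_if_length_Suc by (metis lessI nth_take)
    moreover have "hd (take (Suc i) vs) = u" using p(2) i(1) by (cases vs) auto
    ultimately show ?thesis using simple_path_take[OF p(1) i(1)] by blast
  next
    case False
    from step(2) obtain e where "e \<in> F" "ends e = {last vs, z}"
      using p(3) by (auto simp: edge_rel_def)
    from simple_path_snoc[OF p(1) False this] have "simple_path ends F (vs @ [z]) (es @ [e])" .
    moreover have "hd (vs @ [z]) = u" using p(2) len by (cases vs) auto
    ultimately show ?thesis by (intro exI[of _ "vs @ [z]"] exI[of _ "es @ [e]"]) simp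
  qed
qed

text \<open>For a = b the path is the single vertex a, and the cycle is the loop e.\<close>

lemma has_cycle_insert_if_rtrancl:
  assumes e: "e \<notin> F" "ends e = {a, b}" and ba: "(b, a) \<in> (edge_rel ends F X)\<^sup>*"
  shows "has_cycle ends (insert e F)"
proof -
  obtain vs es where p: "simple_path ends F vs es" "hd vs = b" "last vs = a"
    using simple_path_if_rtrancl[OF ba] by blast
  have len: "length vs = Suc (length es)" using p(1) by (simp add: simple_path_def)
  have last_a: "vs ! length es = a" using p(3) nth_eq_last_if_length_Suc[OF len] by simp
  have hd_b: "vs ! 0 = b" using p(2) len by (cases vs) auto
  show ?thesis unfolding has_cycle_def
  proof (intro exI[of _ "es @ [e]"] exI[of _ vs] conjI allI impI)
    show "es @ [e] \<noteq> []" by simp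
    show "length vs = length (es @ [e])" using len by simp
    show "distinct (es @ [e])" using p(1) e(1) by (auto simp: simple_path_def)
    show "distinct vs" using p(1) by (simp add: simple_path_def)
    show "set (es @ [e]) \<subseteq> insert e F" using p(1) by (auto simp: simple_path_def)
    fix i assume i: "i < length (es @ [e])"
    show "ends ((es @ [e]) ! i) = {vs ! i, vs ! ((i + 1) mod length (es @ [e]))}"
    proof (cases "i < length es")
      case True
      then show ?thesis using p(1) by (simp add: simple_path_def nth_append)
    next
      case False
      then have "i = length es" using i by simp
      then show ?thesis using last_a hd_b e(2) by (simp add: nth_append insert_commute)
    qed
  qed
qed

subsection \<open>Counting edges and components of a forest\<close>

lemma quotient_eq_image: "X // R = (\<lambda>x. R `` {x}) ` X"
  unfolding quotient_def by auto

lemma num_components_ge_1: "finite X \<Longrightarrow> X \<noteq> {} \<Longrightarrow> 1 \<le> num_components ends F X"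
  unfolding num_components_def quotient_eq_image by (simp add: Suc_leI card_gt_0_iff)

lemma connected_on_if_num_components_eq_1:
  assumes "num_components ends F X = 1" "X \<noteq> {}"
  shows "connected_on ends F X"
proof -
  obtain C where C: "X // reach ends F X = {C}"
    using assms(1) card_1_singletonE unfolding num_components_def by blast
  have "(w, u) \<in> reach ends F X" if "u \<in> X" "w \<in> X" for u w
  proof -
    have "reach ends F X `` {u} = C" "reach ends F X `` {w} = C"
      using C that unfolding quotient_eq_image by auto
    with reach_refl[OF that(1)] show ?thesis by auto
  qed
  with assms(2) show ?thesis unfolding connected_on_def by blast
qed

text \<open>Adding an edge between two components merges their classes, and the other classes are
merely mapped along, so the number of classes drops.\<close>

lemma num_components_insert_less:
  assumes fin: "finite X" and ab: "a \<in> X" "b \<in> X" "ends e = {a, b}"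
    and nr: "(a, b) \<notin> reach ends F X"
  shows "num_components ends (insert e F) X < num_components ends F X"
proof -
  define R where "R = reach ends F X"
  define R' where "R' = reach ends (insert e F) X"
  have sub: "R \<subseteq> R'" unfolding R_def R'_def by (rule reach_mono) auto
  have merge: "R' `` (R `` {x}) = R' `` {x}" if "x \<in> X" for x
  proof
    show "R' `` (R `` {x}) \<subseteq> R' `` {x}"
      using sub unfolding R'_def by (auto intro: reach_trans)
    show "R' `` {x} \<subseteq> R' `` (R `` {x})"
      using reach_refl[OF that] unfolding R_def by auto
  qed
  have img: "X // R' = (\<lambda>Q. R' `` Q) ` (X // R)"
    using merge unfolding quotient_eq_image image_image by auto
  have "(a, b) \<in> R'"
    unfolding R'_def reach_iff edge_rel_def using ab by (auto intro!: r_into_rtrancl)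
  then have "R' `` {a} = R' `` {b}"
    using reach_sym[of a b] unfolding R'_def by (blast intro: reach_trans)
  then have "R' `` (R `` {a}) = R' `` (R `` {b})" using merge ab by simp
  moreover have "R `` {a} \<noteq> R `` {b}"
    using nr reach_refl[OF ab(2)] unfolding R_def by blast
  moreover have "R `` {a} \<in> X // R" "R `` {b} \<in> X // R"
    using ab unfolding quotient_eq_image by auto
  ultimately have not_inj: "\<not> inj_on (\<lambda>Q. R' `` Q) (X // R)"
    unfolding inj_on_def by blast
  have fin_R: "finite (X // R)" using fin unfolding quotient_eq_image by simp
  have "card ((\<lambda>Q. R' `` Q) ` (X // R)) \<le> card (X // R)" by (rule card_image_le[OF fin_R])
  moreover have "card ((\<lambda>Q. R' `` Q) ` (X // R)) \<noteq> card (X // R)"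
    using not_inj inj_on_iff_eq_card[OF fin_R] by blast
  ultimately have "card ((\<lambda>Q. R' `` Q) ` (X // R)) < card (X // R)" by linarith
  then have "card (X // R') < card (X // R)" by (simp only: img)
  then show ?thesis unfolding num_components_def R_def R'_def .
qed

lemma forest_card_add_num_components_le:
  assumes "finite F" "finite X" "\<forall>e\<in>F. ends e \<subseteq> X \<and> (\<exists>a b. ends e = {a, b})"
    and "\<not> has_cycle ends F"
  shows "card F + num_components ends F X \<le> card X"
  using assms
proof (induction F rule: finite_induct)
  case empty
  then show ?case
    unfolding num_components_def quotient_eq_image by (simp add: card_image_le)
next
  case (insert e F)
  have "\<not> has_cycle ends F" using insert.prems(3) has_cycle_mono by blast
  with insert have IH: "card F + num_components ends F X \<le> card X" by auto
  obtain a b where ab: "ends e = {a, b}" using insert.prems(2) by blast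
  have abX: "a \<in> X" "b \<in> X" using insert.prems(2) ab by auto
  have "(a, b) \<notin> reach ends F X"
  proof
    assume "(a, b) \<in> reach ends F X"
    then have "(b, a) \<in> (edge_rel ends F X)\<^sup>*" using reach_sym reach_iff by metis
    with insert.hyps(2) ab insert.prems(3) show False
      using has_cycle_insert_if_rtrancl by metis
  qed
  from num_components_insert_less[OF insert.prems(1) abX ab this] IH insert.hyps
  show ?case by simp
qed

lemma induced_forest_card_add_num_components_le:
  assumes mg: "multigraph V E ends" and X: "X \<subseteq> V" and A: "A \<subseteq> E"
    and acyclic: "\<not> has_cycle ends A"
  shows "card (induced ends A X) + num_components ends (induced ends A X) X \<le> card X"
proof (rule forest_card_add_num_components_le)
  have fin: "finite E" "finite V" using mg by (auto simp: multigraph_def)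
  then show "finite (induced ends A X)" "finite X"
    using A X unfolding induced_def by (auto intro: finite_subset)
  show "\<forall>e\<in>induced ends A X. ends e \<subseteq> X \<and> (\<exists>a b. ends e = {a, b})"
  proof
    fix e assume e: "e \<in> induced ends A X"
    then have X_e: "ends e \<subseteq> X" and "e \<in> E" using A unfolding induced_def by auto
    then have "ends e \<subseteq> V" "ends e \<noteq> {}" "card (ends e) \<le> 2"
      using mg unfolding multigraph_def by auto
    with fin have "card (ends e) = 1 \<or> card (ends e) = 2"
      by (metis One_nat_def card_0_eq finite_subset le_Suc_eq numeral_2_eq_2 le_zero_eq)
    then have "\<exists>a b. ends e = {a, b}"
      by (auto simp: card_Suc_eq numeral_2_eq_2)
    with X_e show "ends e \<subseteq> X \<and> (\<exists>a b. ends e = {a, b})" by blast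
  qed
  show "\<not> has_cycle ends (induced ends A X)"
    using acyclic has_cycle_mono unfolding induced_def by blast
qed

lemma induced_forests_are_trees_if_saturated:
  assumes mg: "multigraph V E ends" and X: "X \<subseteq> V" and A: "A \<subseteq> E" and B: "B \<subseteq> E"
    and acA: "\<not> has_cycle ends A" and acB: "\<not> has_cycle ends B" and disj: "A \<inter> B = {}"
    and sat: "saturated ends (A \<union> B) X"
  shows "is_tree ends (induced ends A X) X \<and> is_tree ends (induced ends B X) X \<and>
         induced ends A X \<inter> induced ends B X = {}"
proof -
  let ?A = "induced ends A X" and ?B = "induced ends B X"
  have fin: "finite X" "finite ?A" "finite ?B"
    using mg X A B unfolding multigraph_def induced_def by (auto intro: finite_subset)
  have disjX: "?A \<inter> ?B = {}" using disj unfolding induced_def by auto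
  have X_ne: "X \<noteq> {}" using sat unfolding saturated_def by auto
  have "induced ends (A \<union> B) X = ?A \<union> ?B" unfolding induced_def by auto
  then have "int (card ?A) + int (card ?B) = 2 * int (card X) - 2"
    using sat card_Un_disjoint[OF fin(2,3) disjX] unfolding saturated_def by simp
  then have "num_components ends ?A X = 1" "num_components ends ?B X = 1"
    using induced_forest_card_add_num_components_le[OF mg X A acA]
      induced_forest_card_add_num_components_le[OF mg X B acB]
      num_components_ge_1[OF fin(1) X_ne, of ends ?A] num_components_ge_1[OF fin(1) X_ne, of ends ?B]
    by linarith+
  moreover have "\<not> has_cycle ends ?A" "\<not> has_cycle ends ?B"
    using acA acB has_cycle_mono unfolding induced_def by blast+
  ultimately show ?thesis
    using disjX X_ne connected_on_if_num_components_eq_1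
    unfolding is_tree_def is_subgraph_on_def induced_def by blast
qed

subsection \<open>The exchange graph\<close>

lemma assoc_edges_eq_if_rtrancl_exch_edges:
  assumes "(h0, h) \<in> (exch_edges V E ends)\<^sup>*"
  shows "assoc_edges h = assoc_edges h0"
  using assms
proof (induction rule: rtrancl_induct)
  case base
  then show ?case by simp
next
  case (step y z)
  from step(2) have "assoc_edges z = assoc_edges y"
    unfolding exch_edges_def exch_adj12_def assoc_edges_def vpair_def by auto
  with step(3) show ?case by simp
qed

lemma exch_verts_vpairE:
  assumes "h \<in> exch_verts V E ends"
  obtains A B where "vpair h = (A, B)" "A \<subseteq> E" "B \<subseteq> E" "\<not> has_cycle ends A"
    "\<not> has_cycle ends B" "A \<inter> B = {}"
  using assms unfolding exch_verts_def vpair_def spanning_trees_def spanning_2forests_def is_tree_def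
  by (auto simp: Int_commute)

theorem lemma2p6:
  fixes V :: "'v set" and E :: "'e set" and ends :: "'e \<Rightarrow> 'v set"
    and h0 :: "'e exvert" and X :: "'v set"
  assumes "multigraph V E ends"
    and "connected_on ends E V"
    and "h0 \<in> exch_verts V E ends"
    and "X \<subseteq> V"
    and "saturated ends (assoc_edges h0) X"
  shows "\<forall>h \<in> exch_component V E ends h0.
           is_tree ends (induced ends (fst (vpair h)) X) X \<and>
           is_tree ends (induced ends (snd (vpair h)) X) X \<and>
           induced ends (fst (vpair h)) X \<inter> induced ends (snd (vpair h)) X = {}"
proof
  fix h assume "h \<in> exch_component V E ends h0"
  then have h: "h \<in> exch_verts V E ends" and h0_h: "(h0, h) \<in> (exch_edges V E ends)\<^sup>*"
    unfolding exch_component_def by auto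
  obtain A B where AB: "vpair h = (A, B)" "A \<subseteq> E" "B \<subseteq> E" "\<not> has_cycle ends A"
    "\<not> has_cycle ends B" "A \<inter> B = {}"
    using exch_verts_vpairE[OF h] by blast
  have "saturated ends (A \<union> B) X"
    using assoc_edges_eq_if_rtrancl_exch_edges[OF h0_h] assms(5) AB(1)
    by (simp add: assoc_edges_def)
  from induced_forests_are_trees_if_saturated[OF assms(1,4) AB(2-6) this] AB(1)
  show "is_tree ends (induced ends (fst (vpair h)) X) X \<and>
      is_tree ends (induced ends (snd (vpair h)) X) X \<and>
      induced ends (fst (vpair h)) X \<inter> induced ends (snd (vpair h)) X = {}"
    by simp
qed

end
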